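(* Let $G$ be a connected graph with vertex set $\{u_1,\dots,u_m\}$ and $\kappa(G)=\delta(G)>0$, and let $n\ge 3$. Let $S\subseteq V(G\times K_n)$ satisfy: (1) $|S|=(n-1)\delta(G)$; (2) $S_i':=S_i\setminus S\neq\varnothing$ for every $i=1,\dots,m$; (3) $G\times K_n-S$ has no isolated vertex. Then the graph $G^*$ associated with $G$ and $S$ is connected.
   Context: The Kronecker product $G_1\times G_2$ has vertex set $V(G_1)\times V(G_2)$, with $(u_1,v_1)(u_2,v_2)$ an edge iff $u_1u_2\in E(G_1)$ and $v_1v_2\in E(G_2)$. Write $V(K_n)=\{v_1,\dots,v_n\}$ and $S_i=\{u_i\}\times V(K_n)$ for $i=1,\dots,m$. Given $S$ as in the statement, $G^*$ is the graph with vertex set $\{S_1',\dots,S_m'\}$ in which $S_i'S_j'$ is an edge iff $G\times K_n-S$ contains an edge with one end in $S_i'$ and the other in $S_j'$. *)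

theory Defs
  imports Main
begin

definition sgraph :: "'a set \<Rightarrow> ('a \<Rightarrow> 'a \<Rightarrow> bool) \<Rightarrow> bool" where
  "sgraph V E \<longleftrightarrow> finite V \<and> (\<forall>x y. E x y \<longrightarrow> x \<in> V \<and> y \<in> V)
     \<and> (\<forall>x y. E x y \<longrightarrow> E y x) \<and> (\<forall>x. \<not> E x x)"

text \<open>Connectedness of the graph with vertex set V, using only edges inside V
(so that this also applies to vertex-deleted subgraphs). The empty graph is
not connected.\<close>

definition gconnected :: "'a set \<Rightarrow> ('a \<Rightarrow> 'a \<Rightarrow> bool) \<Rightarrow> bool" where
  "gconnected V E \<longleftrightarrow> V \<noteq> {} \<and>
     (\<forall>x\<in>V. \<forall>y\<in>V. (\<lambda>a b. E a b \<and> a \<in> V \<and> b \<in> V)\<^sup>*\<^sup>* x y)"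

definition degree :: "'a set \<Rightarrow> ('a \<Rightarrow> 'a \<Rightarrow> bool) \<Rightarrow> 'a \<Rightarrow> nat" where
  "degree V E v = card {w \<in> V. E v w}"

definition min_degree :: "'a set \<Rightarrow> ('a \<Rightarrow> 'a \<Rightarrow> bool) \<Rightarrow> nat" where
  "min_degree V E = Min (degree V E ` V)"

definition vertex_connectivity :: "'a set \<Rightarrow> ('a \<Rightarrow> 'a \<Rightarrow> bool) \<Rightarrow> nat" where
  "vertex_connectivity V E =
     Min {card X | X. X \<subseteq> V \<and> (\<not> gconnected (V - X) E \<or> card (V - X) \<le> 1)}"

definition Kn_verts :: "nat \<Rightarrow> nat set" where
  "Kn_verts n = {0..<n}"

definition Kn_edge :: "nat \<Rightarrow> nat \<Rightarrow> bool" where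
  "Kn_edge i j \<longleftrightarrow> i \<noteq> j"

definition kron_verts :: "'a set \<Rightarrow> 'b set \<Rightarrow> ('a \<times> 'b) set" where
  "kron_verts V1 V2 = V1 \<times> V2"

definition kron_edge :: "('a \<Rightarrow> 'a \<Rightarrow> bool) \<Rightarrow> ('b \<Rightarrow> 'b \<Rightarrow> bool)
    \<Rightarrow> 'a \<times> 'b \<Rightarrow> 'a \<times> 'b \<Rightarrow> bool" where
  "kron_edge E1 E2 x y \<longleftrightarrow> E1 (fst x) (fst y) \<and> E2 (snd x) (snd y)"

definition no_isolated :: "'a set \<Rightarrow> ('a \<Rightarrow> 'a \<Rightarrow> bool) \<Rightarrow> bool" where
  "no_isolated W E \<longleftrightarrow> (\<forall>x\<in>W. \<exists>y\<in>W. E x y)"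

text \<open>S_i = {u_i} \<times> V(K_n), and S_i' = S_i - S.\<close>

definition layer :: "nat \<Rightarrow> 'a \<Rightarrow> ('a \<times> nat) set" where
  "layer n u = {u} \<times> Kn_verts n"

text \<open>The graph G*: its vertex S_u' is indexed by u \<in> V(G) (distinct u give
distinct, disjoint S_u'); S_u' S_w' is an edge iff G \<times> K_n - S has an edge
with one end in S_u' and the other in S_w'.\<close>

definition gstar_edge :: "nat \<Rightarrow> ('a \<Rightarrow> 'a \<Rightarrow> bool) \<Rightarrow> ('a \<times> nat) set \<Rightarrow> 'a \<Rightarrow> 'a \<Rightarrow> bool" where
  "gstar_edge n E S u w \<longleftrightarrow>
     (\<exists>x \<in> layer n u - S. \<exists>y \<in> layer n w - S. kron_edge E Kn_edge x y)"

end

theory Submission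
  imports Defs
begin

(*
  Suppose G* is disconnected and let A be a connected component of G*
  (viewed as a set of vertices of G), so no G*-edge joins A and V - A.  Let D be the
  boundary of A in G: the vertices having a G-neighbour on the other side of the cut.

  (1) Pure graph theory: in a connected graph the boundary of any proper nonempty
      vertex set A has more than min(delta, kappa) vertices.  If A lies inside D, a
      vertex of A together with all its neighbours lies in D (> delta vertices);
      otherwise A \<inter> D separates A - D from D - A, so |D| > |A \<inter> D| \<ge> kappa.
  (2) Layers: if u w is an edge of G but S_u' S_w' is not an edge of G*, then S_u'
      is a single vertex, i.e. S contains n - 1 vertices of the layer S_u.
  Hence every u \<in> D contributes n - 1 vertices of S in its own layer, so
  (n - 1)|D| \<le> |S| = (n - 1) delta, i.e. |D| \<le> delta = min(delta, kappa),
  contradicting (1).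
*)

section \<open>Paths, cuts and connectivity\<close>

lemma rtranclp_leaves_set:
  assumes "(\<lambda>a b. E a b \<and> a \<in> W \<and> b \<in> W)\<^sup>*\<^sup>* x y" "x \<in> P" "y \<notin> P"
  shows "\<exists>u w. u \<in> P \<and> w \<notin> P \<and> u \<in> W \<and> w \<in> W \<and> E u w"
  using assms by (induction rule: rtranclp_induct) blast+

lemma not_gconnected_split:
  assumes "V \<noteq> {}" "\<not> gconnected V R" and R_sym: "\<And>a b. R a b \<Longrightarrow> R b a"
  obtains A where "A \<subseteq> V" "A \<noteq> {}" "V - A \<noteq> {}"
    "\<And>u w. u \<in> A \<Longrightarrow> w \<in> V - A \<Longrightarrow> \<not> R u w"
proof -
  define R\<^sub>V where "R\<^sub>V = (\<lambda>a b. R a b \<and> a \<in> V \<and> b \<in> V)"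
  obtain v where v: "v \<in> V" using assms(1) by auto
  define A where "A = {w \<in> V. R\<^sub>V\<^sup>*\<^sup>* v w}"
  have "V - A \<noteq> {}"
  proof
    assume "V - A = {}"
    then have reach: "R\<^sub>V\<^sup>*\<^sup>* v x" if "x \<in> V" for x
      using that unfolding A_def by auto
    have "symp R\<^sub>V" using R_sym unfolding R\<^sub>V_def symp_def by blast
    then have "R\<^sub>V\<^sup>*\<^sup>* x y" if "x \<in> V" "y \<in> V" for x y
      using reach[OF that(1)] reach[OF that(2)]
      by (meson rtranclp_trans symp_rtranclp symp_def)
    then show False using assms(1,2) unfolding gconnected_def R\<^sub>V_def by blast
  qed
  moreover have "\<not> R u w" if "u \<in> A" "w \<in> V - A" for u w
    using that rtranclp.rtrancl_into_rtrancl[of R\<^sub>V v u w]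
    unfolding A_def R\<^sub>V_def by auto
  ultimately show ?thesis using that[of A] v unfolding A_def by auto
qed

lemma vertex_connectivity_le_separator:
  assumes "finite V" "X \<subseteq> V" "\<not> gconnected (V - X) E"
  shows "vertex_connectivity V E \<le> card X"
  unfolding vertex_connectivity_def
proof (rule Min_le)
  have "{card X |X. X \<subseteq> V \<and> (\<not> gconnected (V - X) E \<or> card (V - X) \<le> 1)} \<subseteq> card ` Pow V"
    by auto
  then show "finite {card X |X. X \<subseteq> V \<and> (\<not> gconnected (V - X) E \<or> card (V - X) \<le> 1)}"
    using assms(1) finite_subset by blast
qed (use assms in auto)

lemma min_degree_le_degree:
  assumes "finite V" "v \<in> V"
  shows "min_degree V E \<le> degree V E v"
  using assms unfolding min_degree_def by (intro Min_le) auto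

section \<open>The boundary of a cut\<close>

definition boundary :: "'a set \<Rightarrow> ('a \<Rightarrow> 'a \<Rightarrow> bool) \<Rightarrow> 'a set \<Rightarrow> 'a set" where
  "boundary V E A = {u \<in> V. \<exists>w\<in>V. E u w \<and> (u \<in> A \<longleftrightarrow> w \<notin> A)}"

lemma boundary_meets_both_sides:
  assumes "gconnected V E" "A \<subseteq> V" "A \<noteq> {}" "V - A \<noteq> {}"
    and E_sym: "\<And>x y. E x y \<Longrightarrow> E y x"
  obtains a b where "a \<in> A" "b \<in> V - A" "E a b"
    "a \<in> boundary V E A" "b \<in> boundary V E A"
proof -
  obtain x y where "x \<in> A" "y \<in> V - A" using assms(3,4) by blast
  then have "(\<lambda>a b. E a b \<and> a \<in> V \<and> b \<in> V)\<^sup>*\<^sup>* x y"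
    using assms(1,2) unfolding gconnected_def by blast
  then obtain a b where ab: "a \<in> A" "b \<in> V - A" "a \<in> V" "E a b"
    using rtranclp_leaves_set[of E V x y A] \<open>x \<in> A\<close> \<open>y \<in> V - A\<close> by blast
  have "a \<in> boundary V E A" using ab unfolding boundary_def by blast
  moreover have "b \<in> boundary V E A" using ab E_sym[OF ab(4)] unfolding boundary_def by blast
  ultimately show ?thesis using that ab by blast
qed

text \<open>If the whole of A lies on the boundary, a vertex of A and all its neighbours do
(a neighbour outside A is on the boundary through the reverse edge).\<close>

lemma boundary_contains_neighbourhood:
  assumes "A \<subseteq> boundary V E A" "a \<in> A" and E_sym: "\<And>x y. E x y \<Longrightarrow> E y x"
  shows "insert a {w \<in> V. E a w} \<subseteq> boundary V E A"
proof
  fix w assume w: "w \<in> insert a {w \<in> V. E a w}"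
  show "w \<in> boundary V E A"
  proof (cases "w \<in> A")
    case False
    have "a \<in> V" using assms(1,2) unfolding boundary_def by blast
    with False w E_sym show ?thesis using assms(2) unfolding boundary_def by blast
  qed (use assms(1) in blast)
qed

lemma boundary_inner_part_separates:
  assumes "a \<in> A - boundary V E A" "b \<in> boundary V E A - A" "A \<subseteq> V"
  shows "\<not> gconnected (V - A \<inter> boundary V E A) E"
proof
  let ?X = "A \<inter> boundary V E A"
  assume "gconnected (V - ?X) E"
  moreover have "a \<in> V - ?X" "b \<in> V - ?X" using assms unfolding boundary_def by auto
  ultimately have "(\<lambda>x y. E x y \<and> x \<in> V - ?X \<and> y \<in> V - ?X)\<^sup>*\<^sup>* a b"
    unfolding gconnected_def by blast
  then obtain u w where uw: "u \<in> A - ?X" "w \<notin> A - ?X" "w \<in> V - ?X" "u \<in> V" "E u w"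
    using rtranclp_leaves_set[of E "V - ?X" a b "A - ?X"] assms by blast
  then have "w \<notin> A" by blast
  then have "u \<in> boundary V E A" using uw unfolding boundary_def by blast
  then show False using uw by blast
qed

lemma boundary_card_gt:
  assumes "sgraph V E" "gconnected V E" "A \<subseteq> V" "A \<noteq> {}" "V - A \<noteq> {}"
  shows "min (min_degree V E) (vertex_connectivity V E) < card (boundary V E A)"
proof -
  let ?D = "boundary V E A"
  have finV: "finite V" and E_sym: "\<And>x y. E x y \<Longrightarrow> E y x" and E_irr: "\<And>x. \<not> E x x"
    using assms(1) unfolding sgraph_def by auto
  have finD: "finite ?D" using finV unfolding boundary_def by simp
  obtain a b where ab: "a \<in> A" "b \<in> V - A" "E a b" "a \<in> ?D" "b \<in> ?D"
    by (rule boundary_meets_both_sides[OF assms(2-5) E_sym])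
  show ?thesis
  proof (cases "A \<subseteq> ?D")
    case True
    have "a \<notin> {w \<in> V. E a w}" using E_irr by simp
    then have "degree V E a < card (insert a {w \<in> V. E a w})"
      unfolding degree_def using finV by simp
    also have "\<dots> \<le> card ?D"
      using card_mono[OF finD boundary_contains_neighbourhood[OF True ab(1) E_sym]] .
    moreover have "min_degree V E \<le> degree V E a"
      using min_degree_le_degree[OF finV] ab(1) assms(3) by blast
    ultimately show ?thesis by linarith
  next
    case False
    then obtain a' where "a' \<in> A - ?D" by blast
    then have "\<not> gconnected (V - A \<inter> ?D) E"
      using ab(2,5) by (intro boundary_inner_part_separates assms(3)) auto
    then have "vertex_connectivity V E \<le> card (A \<inter> ?D)"
      using vertex_connectivity_le_separator[OF finV] assms(3) by blast
    also have "\<dots> < card ?D"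
      using ab(2,5) by (intro psubset_card_mono finD) blast
    finally show ?thesis by linarith
  qed
qed

section \<open>Layers of the Kronecker product\<close>

lemma gstar_edge_sym:
  assumes "\<And>x y. E x y \<Longrightarrow> E y x" "gstar_edge n E S u w"
  shows "gstar_edge n E S w u"
  using assms unfolding gstar_edge_def kron_edge_def Kn_edge_def by fastforce

text \<open>If u w is an edge of G but S_u' S_w' is not an edge of G*, then S_u' is a single
vertex: two vertices of S_u' cannot both share their K_n-coordinate with a vertex of
S_w', and all other pairs are adjacent in the product.\<close>

lemma missing_gstar_edge_singleton:
  assumes "E u w" "\<not> gstar_edge n E S u w" "x \<in> layer n u - S" "y \<in> layer n w - S"
  shows "layer n u - S = {x}"
proof -
  have adj: "snd z = snd y" if "z \<in> layer n u - S" for z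
  proof (rule ccontr)
    assume "snd z \<noteq> snd y"
    moreover have "fst z = u" "fst y = w" using that assms(4) unfolding layer_def by auto
    ultimately have "kron_edge E Kn_edge z y"
      using assms(1) unfolding kron_edge_def Kn_edge_def by simp
    then show False using assms(2,4) that unfolding gstar_edge_def by blast
  qed
  have "z = x" if "z \<in> layer n u - S" for z
    using adj[OF that] adj[OF assms(3)] that assms(3) unfolding layer_def
    by (metis Diff_iff mem_Sigma_iff prod.collapse singletonD)
  then show ?thesis using assms(3) by blast
qed

lemma card_S_inter_layer:
  assumes "layer n u - S = {x}"
  shows "card (S \<inter> layer n u) = n - 1"
proof -
  have "card (layer n u) = n" by (simp add: layer_def Kn_verts_def card_cartesian_product)
  moreover have "card (layer n u - S) = card (layer n u) - card (layer n u \<inter> S)"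
    by (rule card_Diff_subset_Int) (simp add: layer_def Kn_verts_def)
  ultimately show ?thesis using assms by (simp add: Int_commute)
qed

lemma card_layers_le:
  assumes "finite S" "finite D" "\<And>u. u \<in> D \<Longrightarrow> card (S \<inter> layer n u) = k"
  shows "k * card D \<le> card S"
proof -
  have "k * card D = (\<Sum>u\<in>D. card (S \<inter> layer n u))" using assms(3) by simp
  also have "\<dots> = card (\<Union>u\<in>D. S \<inter> layer n u)"
    by (rule card_UN_disjoint[symmetric]) (auto simp: assms(1,2) layer_def)
  also have "\<dots> \<le> card S" by (rule card_mono[OF assms(1)]) auto
  finally show ?thesis .
qed

theorem lemma2p3:
  fixes V :: "'a set" and E :: "'a \<Rightarrow> 'a \<Rightarrow> bool"
    and n :: nat and S :: "('a \<times> nat) set"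
  assumes "sgraph V E"
    and "gconnected V E"
    and "vertex_connectivity V E = min_degree V E"
    and "min_degree V E > 0"
    and "n \<ge> 3"
    and "S \<subseteq> kron_verts V (Kn_verts n)"
    and "card S = (n - 1) * min_degree V E"
    and "\<forall>u\<in>V. layer n u - S \<noteq> {}"
    and "no_isolated (kron_verts V (Kn_verts n) - S) (kron_edge E Kn_edge)"
  shows "gconnected V (gstar_edge n E S)"
proof (rule ccontr)
  assume disconnected: "\<not> gconnected V (gstar_edge n E S)"
  have finV: "finite V" and E_sym: "\<And>x y. E x y \<Longrightarrow> E y x"
    using assms(1) unfolding sgraph_def by auto
  have gstar_sym: "gstar_edge n E S b a" if "gstar_edge n E S a b" for a b
    using gstar_edge_sym[of E, OF E_sym that] .
  have "V \<noteq> {}" using assms(2) unfolding gconnected_def by auto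
  then obtain A where A: "A \<subseteq> V" "A \<noteq> {}" "V - A \<noteq> {}"
    and no_cross: "\<And>u w. u \<in> A \<Longrightarrow> w \<in> V - A \<Longrightarrow> \<not> gstar_edge n E S u w"
    using not_gconnected_split[OF _ disconnected gstar_sym] by blast
  let ?D = "boundary V E A"
  text \<open>Each boundary vertex has a G-edge across the cut, which is missing in G*.\<close>
  have layer_D: "card (S \<inter> layer n u) = n - 1" if u_D: "u \<in> ?D" for u
  proof -
    obtain w where uw: "u \<in> V" "w \<in> V" "E u w" "u \<in> A \<longleftrightarrow> w \<notin> A"
      using u_D unfolding boundary_def by blast
    have "\<not> gstar_edge n E S u w"
      using uw no_cross[of u w] no_cross[of w u] gstar_sym by blast
    moreover obtain x y where "x \<in> layer n u - S" "y \<in> layer n w - S"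
      using assms(8) uw(1,2) by blast
    ultimately have "layer n u - S = {x}"
      by (rule missing_gstar_edge_singleton[where E = E, OF uw(3)])
    then show ?thesis by (rule card_S_inter_layer)
  qed
  have "finite (kron_verts V (Kn_verts n))" by (simp add: kron_verts_def Kn_verts_def finV)
  then have "finite S" using assms(6) by (rule finite_subset[rotated])
  moreover have "finite ?D" using finV unfolding boundary_def by simp
  ultimately have "(n - 1) * card ?D \<le> (n - 1) * min_degree V E"
    using card_layers_le[of S ?D n "n - 1"] layer_D assms(7) by simp
  then have "card ?D \<le> min_degree V E" using assms(5) by simp
  then show False using boundary_card_gt[OF assms(1,2) A] assms(3) by simp
qed

end
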